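(* Let $\chi>0$, $\phi\in C^1(\mathbb{R})$ with $\phi'>0$, $\phi(0)>0$, and $g\in C^1([0,\infty))$ positive with exactly one $\beta>0$ such that $g'<0$ on $[0,\beta)$ and $g'>0$ on $(\beta,\infty)$. Let $g(\beta)<u_-<\min\{g(0),\lim_{V\to\infty}g(V)\}$, $0<v_+<\beta<v_-$ with $g(v_\pm)=u_-$, $Q(V)=(v_--V)^2\inf_{z\in(V,v_-]}g'(z)$ on $(\beta,v_-)$, $s_2:=\chi\big(1-\frac{u_-}{g(0)}\big)^{-1}\big[\phi\big(\sqrt{\frac{1}{v_--\beta}\int_\beta^{v_-}Q}\big)-\frac{u_-\phi(0)}{g(0)}\big]$, $B(V)=\frac{s}{\chi}+\frac{u_-}{g(V)}\big(\phi(0)-\frac{s}{\chi}\big)$, $h(W)=\frac{u_-(\chi\phi(0)-s)}{\chi\phi(W)-s}$. Suppose $\chi\phi(0)<s<s_2$, let $v^*\in(\beta,v_-)$ satisfy $0<\phi^{-1}(B(0))<\sqrt{Q(v^* )}$, and choose $w^*$ with $\phi^{-1}(B(0))<w^*<\sqrt{Q(v^* )}$. Then the negative eigenvalue $\lambda_2(E_-)=\frac{-h'(0)-\sqrt{h'(0)^2+4g'(v_-)}}{2}$ of the linearization of $V'=W$, $W'=-h(W)+g(V)$ at $E_-=(v_-,0)$ satisfies $\lambda_2(E_-)<-\frac{w^*}{v_--v^*}<0$. *)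

theory Defs
  imports "HOL-Analysis.Analysis"
begin

definition Qfun :: "(real \<Rightarrow> real) \<Rightarrow> real \<Rightarrow> real \<Rightarrow> real" where
  "Qfun g' vm V = (vm - V)^2 * Inf (g' ` {V<..vm})"

definition s2 :: "real \<Rightarrow> (real \<Rightarrow> real) \<Rightarrow> (real \<Rightarrow> real) \<Rightarrow> (real \<Rightarrow> real)
                  \<Rightarrow> real \<Rightarrow> real \<Rightarrow> real \<Rightarrow> real" where
  "s2 chi \<phi> g g' \<beta> um vm =
     chi * inverse (1 - um / g 0) *
       (\<phi> (sqrt (1 / (vm - \<beta>) * integral {\<beta>..vm} (Qfun g' vm))) - um * \<phi> 0 / g 0)"

definition Bfun :: "real \<Rightarrow> (real \<Rightarrow> real) \<Rightarrow> (real \<Rightarrow> real) \<Rightarrow> real \<Rightarrow> real \<Rightarrow> real \<Rightarrow> real" where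
  "Bfun chi \<phi> g um s V = s / chi + um / g V * (\<phi> 0 - s / chi)"

definition hfun :: "real \<Rightarrow> (real \<Rightarrow> real) \<Rightarrow> real \<Rightarrow> real \<Rightarrow> real \<Rightarrow> real" where
  "hfun chi \<phi> um s W = um * (chi * \<phi> 0 - s) / (chi * \<phi> W - s)"

text \<open>The negative eigenvalue of the linearization of V' = W, W' = -h(W) + g(V) at (v_-, 0).\<close>
definition lambda2 :: "real \<Rightarrow> (real \<Rightarrow> real) \<Rightarrow> (real \<Rightarrow> real) \<Rightarrow> real \<Rightarrow> real \<Rightarrow> real \<Rightarrow> real" where
  "lambda2 chi \<phi> g' um s vm =
     (- deriv (hfun chi \<phi> um s) 0
      - sqrt ((deriv (hfun chi \<phi> um s) 0)^2 + 4 * g' vm)) / 2"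

end

theory Submission
  imports Defs
begin

text \<open>Since the infimum defining \<open>Q(v\<^sup>*)\<close> is at most \<open>g'(v\<^sub>-)\<close>, the slope
  \<open>w\<^sup>*/(v\<^sub>- - v\<^sup>*)\<close> is below \<open>sqrt (Q(v\<^sup>*))/(v\<^sub>- - v\<^sup>*) \<le> sqrt (g'(v\<^sub>-))\<close>.
  On the other hand \<open>h'(0) > 0\<close> because \<open>s > \<chi> \<phi>(0)\<close>, so
  \<open>\<lambda>\<^sub>2 < -sqrt (4 g'(v\<^sub>-))/2 = -sqrt (g'(v\<^sub>-))\<close>.
  Only these facts about the data enter.\<close>

lemma Qfun_le_at_endpoint:
  assumes "V < vm" and "bdd_below (g' ` {V<..vm})"
  shows "Qfun g' vm V \<le> (vm - V)^2 * g' vm"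
proof -
  have "Inf (g' ` {V<..vm}) \<le> g' vm"
    using assms by (intro cInf_lower) auto
  then show ?thesis
    unfolding Qfun_def by (rule mult_left_mono) simp
qed

lemma sqrt_Qfun_div_le:
  assumes "V < vm" and "bdd_below (g' ` {V<..vm})" and "g' vm \<ge> 0"
  shows "sqrt (Qfun g' vm V) / (vm - V) \<le> sqrt (g' vm)"
proof -
  have "sqrt (Qfun g' vm V) \<le> sqrt ((vm - V)^2 * g' vm)"
    using Qfun_le_at_endpoint[OF assms(1,2)] by (rule real_sqrt_le_mono)
  also have "\<dots> = (vm - V) * sqrt (g' vm)"
    using assms(1) by (simp add: real_sqrt_mult)
  finally show ?thesis
    using assms(1) by (simp add: field_simps)
qed

lemma hfun_has_real_derivative:
  assumes "(\<phi> has_real_derivative \<phi>' W) (at W)" and "chi * \<phi> W \<noteq> s"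
  shows "(hfun chi \<phi> um s has_real_derivative
           - um * (chi * \<phi> 0 - s) * (chi * \<phi>' W) / (chi * \<phi> W - s)^2) (at W)"
proof -
  have "((\<lambda>W. um * (chi * \<phi> 0 - s) / (chi * \<phi> W - s)) has_real_derivative
          - (um * (chi * \<phi> 0 - s)) * (chi * \<phi>' W - 0) / (chi * \<phi> W - s)^2) (at W)"
    by (rule derivative_eq_intros refl assms(1))+ (use assms(2) in \<open>auto simp: power2_eq_square\<close>)
  then show ?thesis
    unfolding hfun_def by simp
qed

lemma deriv_hfun_0_pos:
  assumes "(\<phi> has_real_derivative \<phi>' 0) (at 0)" and "\<phi>' 0 > 0"
    and "chi > 0" and "um > 0" and "chi * \<phi> 0 < s"
  shows "deriv (hfun chi \<phi> um s) 0 > 0"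
proof -
  have "deriv (hfun chi \<phi> um s) 0 = - um * (chi * \<phi> 0 - s) * (chi * \<phi>' 0) / (chi * \<phi> 0 - s)^2"
    using assms(5) by (intro DERIV_imp_deriv hfun_has_real_derivative assms(1)) simp
  also have "\<dots> = um * (s - chi * \<phi> 0) * (chi * \<phi>' 0) / (s - chi * \<phi> 0)^2"
    by (simp add: power2_commute algebra_simps)
  also have "\<dots> > 0"
    using assms(2-5) by simp
  finally show ?thesis .
qed

lemma lambda2_lt_neg_sqrt:
  assumes "deriv (hfun chi \<phi> um s) 0 > 0" and "g' vm \<ge> 0"
  shows "lambda2 chi \<phi> g' um s vm < - sqrt (g' vm)"
proof -
  define h' where "h' = deriv (hfun chi \<phi> um s) 0"
  have "2 * sqrt (g' vm) = sqrt (4 * g' vm)"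
    by (simp add: real_sqrt_mult)
  also have "\<dots> \<le> sqrt (h'^2 + 4 * g' vm)"
    by simp
  finally show ?thesis
    using assms(1) unfolding lambda2_def h'_def[symmetric] by simp
qed

theorem proposition2p11:
  fixes chi s \<beta> u\<^sub>m v\<^sub>p v\<^sub>m v\<^sub>s w\<^sub>s :: real
    and \<phi> \<phi>' g g' :: "real \<Rightarrow> real"
    and L :: ereal
  assumes chi: "chi > 0"
    and phi_deriv: "\<And>x. (\<phi> has_real_derivative \<phi>' x) (at x)"
    and phi_C1: "continuous_on UNIV \<phi>'"
    and phi'_pos: "\<And>x. \<phi>' x > 0"
    and phi0: "\<phi> 0 > 0"
    and g_deriv: "\<And>x. x \<ge> 0 \<Longrightarrow> (g has_real_derivative g' x) (at x within {0..})"
    and g_C1: "continuous_on {0..} g'"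
    and g_pos: "\<And>x. x \<ge> 0 \<Longrightarrow> g x > 0"
    and beta: "\<beta> > 0"
    and g'_neg: "\<And>x. 0 \<le> x \<Longrightarrow> x < \<beta> \<Longrightarrow> g' x < 0"
    and g'_pos: "\<And>x. x > \<beta> \<Longrightarrow> g' x > 0"
    and g_lim: "((\<lambda>V. ereal (g V)) \<longlongrightarrow> L) at_top"
    and um_low: "g \<beta> < u\<^sub>m"
    and um_up1: "u\<^sub>m < g 0"
    and um_up2: "ereal u\<^sub>m < L"
    and vs: "0 < v\<^sub>p" "v\<^sub>p < \<beta>" "\<beta> < v\<^sub>m"
    and gvp: "g v\<^sub>p = u\<^sub>m"
    and gvm: "g v\<^sub>m = u\<^sub>m"
    and s_low: "chi * \<phi> 0 < s"
    and s_up: "s < s2 chi \<phi> g g' \<beta> u\<^sub>m v\<^sub>m"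
    and vstar: "\<beta> < v\<^sub>s" "v\<^sub>s < v\<^sub>m"
    and vstar2: "0 < inv \<phi> (Bfun chi \<phi> g u\<^sub>m s 0)"
                "inv \<phi> (Bfun chi \<phi> g u\<^sub>m s 0) < sqrt (Qfun g' v\<^sub>m v\<^sub>s)"
    and wstar: "inv \<phi> (Bfun chi \<phi> g u\<^sub>m s 0) < w\<^sub>s" "w\<^sub>s < sqrt (Qfun g' v\<^sub>m v\<^sub>s)"
  shows "lambda2 chi \<phi> g' u\<^sub>m s v\<^sub>m < - w\<^sub>s / (v\<^sub>m - v\<^sub>s) \<and> - w\<^sub>s / (v\<^sub>m - v\<^sub>s) < 0"
proof -
  have gap: "v\<^sub>m - v\<^sub>s > 0" and w_pos: "w\<^sub>s > 0"
    using vstar vstar2(1) wstar(1) by auto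
  have g'_nonneg: "g' z \<ge> 0" if "z \<in> {v\<^sub>s<..v\<^sub>m}" for z
    using g'_pos[of z] vstar that by simp
  have "w\<^sub>s / (v\<^sub>m - v\<^sub>s) < sqrt (Qfun g' v\<^sub>m v\<^sub>s) / (v\<^sub>m - v\<^sub>s)"
    using wstar(2) gap by (simp add: divide_strict_right_mono)
  also have "\<dots> \<le> sqrt (g' v\<^sub>m)"
  proof (rule sqrt_Qfun_div_le)
    show "bdd_below (g' ` {v\<^sub>s<..v\<^sub>m})"
      using g'_nonneg by (intro bdd_belowI[of _ 0]) blast
  qed (use vstar g'_nonneg in auto)
  finally have slope_lt: "w\<^sub>s / (v\<^sub>m - v\<^sub>s) < sqrt (g' v\<^sub>m)" .
  have "u\<^sub>m > 0"
    using g_pos[of \<beta>] beta um_low by simp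
  then have "deriv (hfun chi \<phi> u\<^sub>m s) 0 > 0"
    using phi_deriv phi'_pos chi s_low by (intro deriv_hfun_0_pos)
  then have "lambda2 chi \<phi> g' u\<^sub>m s v\<^sub>m < - sqrt (g' v\<^sub>m)"
    using g'_nonneg vstar by (intro lambda2_lt_neg_sqrt) auto
  then show ?thesis
    using slope_lt w_pos gap by auto
qed

end
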